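(* Let $L$ be a frame and $\mathcal F\subseteq\mathsf{Filt}(L)$ such that for every $F\in\mathcal F$ and $a\in L$, the filter $\{x\in L\mid x\vee a\in F\}$ belongs to $\mathcal F$. Then $\mathrm{Int}(\mathcal F)$ is a subcolocale of the coframe $(\mathsf{Filt}(L),\sqsubseteq)$; that is, $\mathrm{Int}(\mathcal F)$ is closed under all joins (intersections) of $\mathsf{Filt}(L)$, and $H\setminus G\in\mathrm{Int}(\mathcal F)$ for all $H\in\mathrm{Int}(\mathcal F)$ and $G\in\mathsf{Filt}(L)$.
   Context: A frame is a complete lattice $L$ with $(\bigvee A)\wedge b=\bigvee_{a\in A}(a\wedge b)$. A filter is a nonempty up-closed subset closed under finite meets. $\mathsf{Filt}(L)$ denotes the set of filters ordered by reverse inclusion ($F\sqsubseteq G$ iff $G\subseteq F$); it is a coframe in which joins are intersections and the co-Heyting difference is $H\setminus G=\{a\in L\mid\forall b\in G,\ b\vee a\in H\}$, characterised by $H\setminus G\sqsubseteq F$ iff $H\sqsubseteq F\sqcup G$. $\mathrm{Int}(\mathcal F)$ is the set of intersections of subfamilies of $\mathcal F$ (empty intersection $=L$). *)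

theory Defs
  imports Main
begin

definition is_frame :: "'a::complete_lattice itself \<Rightarrow> bool" where
  "is_frame _ \<longleftrightarrow> (\<forall>(A::'a set) b. inf (Sup A) b = Sup ((\<lambda>a. inf a b) ` A))"

definition is_filter :: "'a::complete_lattice set \<Rightarrow> bool" where
  "is_filter F \<longleftrightarrow> F \<noteq> {} \<and> (\<forall>a b. a \<in> F \<longrightarrow> a \<le> b \<longrightarrow> b \<in> F)
     \<and> (\<forall>a b. a \<in> F \<longrightarrow> b \<in> F \<longrightarrow> inf a b \<in> F)"

definition Filt :: "'a::complete_lattice set set" where
  "Filt = {F. is_filter F}"

text \<open>Co-Heyting difference in Filt(L) (ordered by reverse inclusion).\<close>
definition filt_diff :: "'a::complete_lattice set \<Rightarrow> 'a set \<Rightarrow> 'a set" where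
  "filt_diff H G = {a. \<forall>b\<in>G. sup b a \<in> H}"

text \<open>Int(F): intersections of subfamilies (empty intersection = UNIV = L).\<close>
definition IntFam :: "'a set set \<Rightarrow> 'a set set" where
  "IntFam \<F> = {\<Inter>\<S> | \<S>. \<S> \<subseteq> \<F>}"

end

theory Submission
  imports Defs
begin

text \<open>Every member of \<open>Int(\<F>)\<close> is an intersection of members of \<open>\<F>\<close>, so both closure
  properties reduce to rewriting an intersection as one over a subfamily of \<open>\<F>\<close>.
  For the difference, \<open>a \<in> (\<Inter>T) \<setminus> G\<close> says \<open>b \<squnion> a \<in> F\<close> for all \<open>F \<in> T\<close> and \<open>b \<in> G\<close>,
  i.e. \<open>(\<Inter>T) \<setminus> G\<close> is the intersection of the filters \<open>{x. x \<squnion> b \<in> F}\<close>, which lie in \<open>\<F>\<close>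
  by hypothesis.\<close>

lemma Inter_in_Filt:
  assumes "\<S> \<subseteq> Filt"
  shows "\<Inter>\<S> \<in> Filt"
proof -
  have "top \<in> F" if "F \<in> \<S>" for F
  proof -
    from that assms have "is_filter F" by (auto simp: Filt_def)
    then show ?thesis unfolding is_filter_def by (meson ex_in_conv top_greatest)
  qed
  with assms show ?thesis
    unfolding Filt_def is_filter_def by auto blast+
qed

lemma IntFam_subset_Filt: "\<F> \<subseteq> Filt \<Longrightarrow> IntFam \<F> \<subseteq> Filt"
  using Inter_in_Filt by (auto simp: IntFam_def)

lemma Inter_in_IntFam:
  assumes "\<S> \<subseteq> IntFam \<F>"
  shows "\<Inter>\<S> \<in> IntFam \<F>"
proof -
  define U where "U = {F \<in> \<F>. \<exists>X\<in>\<S>. X \<subseteq> F}"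
  have "\<Inter>U \<subseteq> X" if "X \<in> \<S>" for X
  proof -
    obtain T where "T \<subseteq> \<F>" "X = \<Inter>T"
      using assms \<open>X \<in> \<S>\<close> by (auto simp: IntFam_def)
    then have "T \<subseteq> U" using \<open>X \<in> \<S>\<close> by (auto simp: U_def)
    with \<open>X = \<Inter>T\<close> show ?thesis by blast
  qed
  then have "\<Inter>\<S> = \<Inter>U" by (auto simp: U_def)
  moreover have "U \<subseteq> \<F>" by (simp add: U_def)
  ultimately show ?thesis by (auto simp: IntFam_def)
qed

lemma filt_diff_Inter:
  "filt_diff (\<Inter>T) G = \<Inter>{{x. sup x b \<in> F} | F b. F \<in> T \<and> b \<in> G}"
proof
  show "filt_diff (\<Inter>T) G \<subseteq> \<Inter>{{x. sup x b \<in> F} | F b. F \<in> T \<and> b \<in> G}"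
    unfolding filt_diff_def by (auto simp: sup_commute)
  show "\<Inter>{{x. sup x b \<in> F} | F b. F \<in> T \<and> b \<in> G} \<subseteq> filt_diff (\<Inter>T) G"
  proof
    fix a assume a: "a \<in> \<Inter>{{x. sup x b \<in> F} | F b. F \<in> T \<and> b \<in> G}"
    have "sup b a \<in> F" if "F \<in> T" "b \<in> G" for F b
    proof -
      from a that have "sup a b \<in> F" by blast
      then show ?thesis by (simp add: sup_commute)
    qed
    then show "a \<in> filt_diff (\<Inter>T) G" by (simp add: filt_diff_def)
  qed
qed

lemma filt_diff_in_IntFam:
  assumes closed: "\<And>F a. F \<in> \<F> \<Longrightarrow> {x. sup x a \<in> F} \<in> \<F>"
    and "H \<in> IntFam \<F>"
  shows "filt_diff H G \<in> IntFam \<F>"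
proof -
  obtain T where "T \<subseteq> \<F>" "H = \<Inter>T"
    using \<open>H \<in> IntFam \<F>\<close> by (auto simp: IntFam_def)
  then have "{{x. sup x b \<in> F} | F b. F \<in> T \<and> b \<in> G} \<subseteq> \<F>"
    using closed by blast
  then show ?thesis
    unfolding \<open>H = \<Inter>T\<close> filt_diff_Inter IntFam_def by blast
qed

theorem mainTheorem8:
  fixes \<F> :: "'a::complete_lattice set set"
  assumes frame: "is_frame TYPE('a)"
    and sub: "\<F> \<subseteq> Filt"
    and closed: "\<And>F a. F \<in> \<F> \<Longrightarrow> {x. sup x a \<in> F} \<in> \<F>"
  shows "IntFam \<F> \<subseteq> Filt
    \<and> (\<forall>\<S>. \<S> \<subseteq> IntFam \<F> \<longrightarrow> \<Inter>\<S> \<in> IntFam \<F>)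
    \<and> (\<forall>H\<in>IntFam \<F>. \<forall>G\<in>Filt. filt_diff H G \<in> IntFam \<F>)"
  using IntFam_subset_Filt[OF sub] Inter_in_IntFam filt_diff_in_IntFam[OF closed]
  by blast

end
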